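(* Let $\theta=(\alpha,\beta,\sigma,\tau)$ with $\alpha,\beta\in\mathbb{R}$, $\sigma>0$, $\tau=\gamma\sigma$ for some $\gamma>0$. Let $F_N=\sum_{j=1}^N w_j\delta_{z_j}$ and $F'_{N'}=\sum_{j=1}^{N'}w'_j\delta_{z'_j}$ be probability measures on $\mathbb{R}$ and let $K=\min(N,N')$. Then \[ \|p_{\theta,F_N}-p_{\theta,F'_{N'}}\|_1\le 2\max_{1\le j\le K}\frac{\left(1+\frac{|\beta|}{\gamma}\right)|z_j-z'_j|}{\sigma}+\sum_{j=1}^K|w_j-w'_j|+\sum_{j=K+1}^N w_j+\sum_{j=K+1}^{N'}w'_j. \]
   Context: Errors-in-variables model: for $\theta=(\alpha,\beta,\sigma,\tau)$ and a probability measure $F$ on $\mathbb{R}$, $p_{\theta,F}(x,y)=\int\phi_\sigma(x-z)\,\phi_\tau(y-\alpha-\beta z)\,dF(z)$, where $\phi_s$ is the $N(0,s^2)$ density. $\|\cdot\|_1$ is the $L^1$ norm with respect to Lebesgue measure on $\mathbb{R}^2$. *)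

theory Defs
  imports "HOL-Probability.Probability"
begin

definition phi :: "real \<Rightarrow> real \<Rightarrow> real" where
  "phi s t = normal_density 0 s t"

definition eiv_density :: "real \<Rightarrow> real \<Rightarrow> real \<Rightarrow> real \<Rightarrow> real measure \<Rightarrow> real \<times> real \<Rightarrow> real" where
  "eiv_density \<alpha> \<beta> \<sigma> \<tau> F = (\<lambda>(x, y). \<integral> z. phi \<sigma> (x - z) * phi \<tau> (y - \<alpha> - \<beta> * z) \<partial>F)"

definition is_discrete_mixing :: "real measure \<Rightarrow> nat \<Rightarrow> (nat \<Rightarrow> real) \<Rightarrow> (nat \<Rightarrow> real) \<Rightarrow> bool" where
  "is_discrete_mixing F N w z \<longleftrightarrow>
     sets F = sets borel \<and> (\<forall>j\<in>{1..N}. 0 \<le> w j) \<and>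
     (\<forall>A\<in>sets borel. emeasure F A = ennreal (\<Sum>j=1..N. w j * indicator A (z j)))"

end

theory Submission
  imports Defs
begin

text \<open>
  For a discrete mixing measure, p_{theta,F} is the finite mixture of the kernels
  k_c(x, y) = phi_sigma(x - c) phi_tau(y - alpha - beta c) with weights w_j at the atoms z_j, and
  every k_c is a probability density on R^2. Matching the first K atoms of the two measures, the
  triangle inequality bounds the L^1 distance by the sum over j <= K of w_j ||k_{z_j} - k_{z'_j}||_1
  and |w_j - w'_j|, plus the unmatched weights. The L^1 distance of two product densities is at most
  the sum of the L^1 distances of the factors, and moving the mean of N(m, s^2) by d moves the
  density by at most sqrt(2/pi) |d| / s in L^1: by the fundamental theorem of calculus in m and
  Fubini, the distance is at most |d| E|X - m| / s^2 for X ~ N(m, s^2). With tau = gamma sigma this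
  bounds the kernel distance by sqrt(2/pi) (1 + |beta|/gamma) |z_j - z'_j| / sigma.
\<close>

lemma normal_density_has_real_derivative_mean:
  assumes "s > 0"
  shows "((\<lambda>m. normal_density m s x) has_real_derivative normal_density m s x * (x - m) / s\<^sup>2) (at m)"
proof -
  have "((\<lambda>m. - (x - m)\<^sup>2 / (2 * s\<^sup>2)) has_real_derivative (x - m) / s\<^sup>2) (at m)"
    using assms by (auto intro!: derivative_eq_intros simp: field_simps power2_eq_square)
  from DERIV_cmult[OF DERIV_fun_exp[OF this], of "1 / sqrt (2 * pi * s\<^sup>2)"] show ?thesis
    unfolding normal_density_def by (simp add: power2_commute)
qed

lemma nn_integral_normal_density:
  assumes "s > 0"
  shows "(\<integral>\<^sup>+x. ennreal (normal_density m s x) \<partial>lborel) = 1"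
  using assms by (simp add: nn_integral_eq_integral)

lemma nn_integral_normal_density_abs_dev:
  assumes "s > 0"
  shows "(\<integral>\<^sup>+x. ennreal (normal_density m s x * \<bar>x - m\<bar> / s\<^sup>2) \<partial>lborel) = ennreal (sqrt (2 / pi) / s)"
proof -
  have "has_bochner_integral lborel (\<lambda>x. normal_density m s x * \<bar>x - m\<bar> / s\<^sup>2) (s * sqrt (2 / pi) / s\<^sup>2)"
    using has_bochner_integral_divide_zero[OF normal_moment_abs_odd[of s m 0]] assms by simp
  then show ?thesis
    using assms by (subst nn_integral_eq_integrable)
      (auto simp: has_bochner_integral_iff power2_eq_square)
qed

lemma normal_density_diff_le_integral_deriv:
  assumes "s > 0" and "a \<le> b"
  shows "ennreal \<bar>normal_density a s x - normal_density b s x\<bar> \<le>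
    (\<integral>\<^sup>+t. ennreal (normal_density t s x * \<bar>x - t\<bar> / s\<^sup>2) * indicator {a..b} t \<partial>lborel)"
proof -
  define f' where "f' t = normal_density t s x * (x - t) / s\<^sup>2" for t
  have "(f' has_integral normal_density b s x - normal_density a s x) {a..b}"
    using assms unfolding f'_def
    by (intro fundamental_theorem_of_calculus)
       (auto simp: has_real_derivative_iff_has_vector_derivative[symmetric]
             intro: has_field_derivative_at_within normal_density_has_real_derivative_mean)
  moreover have "continuous_on {a..b} (\<lambda>t. \<bar>f' t\<bar>)"
    using assms unfolding f'_def normal_density_def by (intro continuous_intros) auto
  then have "(\<lambda>t. \<bar>f' t\<bar>) integrable_on {a..b}"
    by (rule integrable_continuous_interval)
  ultimately have "\<bar>normal_density a s x - normal_density b s x\<bar> \<le> integral {a..b} (\<lambda>t. \<bar>f' t\<bar>)"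
    using integral_norm_bound_integral[of f' "{a..b}" "\<lambda>t. \<bar>f' t\<bar>"]
    by (auto simp: has_integral_integrable_integral abs_minus_commute)
  also have "ennreal \<dots> = (\<integral>\<^sup>+t. ennreal \<bar>f' t\<bar> * indicator {a..b} t \<partial>lborel)"
    using \<open>(\<lambda>t. \<bar>f' t\<bar>) integrable_on {a..b}\<close>
    by (intro nn_integral_has_integral_lebesgue'[symmetric]) auto
  finally show ?thesis
    by (simp add: f'_def abs_mult ennreal_leI)
qed

lemma nn_integral_abs_diff_normal_density_le:
  assumes "s > 0"
  shows "(\<integral>\<^sup>+x. ennreal \<bar>normal_density a s x - normal_density b s x\<bar> \<partial>lborel)
    \<le> ennreal (sqrt (2 / pi) * \<bar>a - b\<bar> / s)"
proof -
  have ordered: "(\<integral>\<^sup>+x. ennreal \<bar>normal_density a s x - normal_density b s x\<bar> \<partial>lborel)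
    \<le> ennreal (sqrt (2 / pi) * \<bar>a - b\<bar> / s)" if ab: "a \<le> b" for a b
  proof -
    have "(\<integral>\<^sup>+x. ennreal \<bar>normal_density a s x - normal_density b s x\<bar> \<partial>lborel)
        \<le> (\<integral>\<^sup>+x. \<integral>\<^sup>+t. ennreal (normal_density t s x * \<bar>x - t\<bar> / s\<^sup>2) * indicator {a..b} t \<partial>lborel \<partial>lborel)"
      using assms ab by (intro nn_integral_mono normal_density_diff_le_integral_deriv)
    also have "\<dots> = (\<integral>\<^sup>+t. (\<integral>\<^sup>+x. ennreal (normal_density t s x * \<bar>x - t\<bar> / s\<^sup>2) \<partial>lborel) * indicator {a..b} t \<partial>lborel)"
      by (subst lborel_pair.Fubini') (auto simp: normal_density_def intro!: nn_integral_cong nn_integral_multc)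
    also have "\<dots> = ennreal (sqrt (2 / pi) / s) * emeasure lborel {a..b}"
      using assms by (simp add: nn_integral_normal_density_abs_dev nn_integral_cmult_indicator)
    also have "\<dots> = ennreal (sqrt (2 / pi) * \<bar>a - b\<bar> / s)"
      using assms ab by (simp add: ennreal_mult[symmetric])
    finally show ?thesis .
  qed
  show ?thesis
    using ordered[of a b] ordered[of b a] by (cases "a \<le> b") (simp_all add: abs_minus_commute)
qed

lemma nn_integral_pair_measure_mult:
  fixes u :: "'a \<Rightarrow> ennreal" and v :: "'b \<Rightarrow> ennreal"
  assumes "sigma_finite_measure N" and [measurable]: "u \<in> borel_measurable M" "v \<in> borel_measurable N"
  shows "(\<integral>\<^sup>+p. u (fst p) * v (snd p) \<partial>(M \<Otimes>\<^sub>M N)) = (\<integral>\<^sup>+x. u x \<partial>M) * (\<integral>\<^sup>+y. v y \<partial>N)"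
proof -
  have "(\<integral>\<^sup>+p. u (fst p) * v (snd p) \<partial>(M \<Otimes>\<^sub>M N)) = (\<integral>\<^sup>+x. \<integral>\<^sup>+y. u x * v y \<partial>N \<partial>M)"
    using sigma_finite_measure.nn_integral_fst[OF assms(1), of "\<lambda>p. u (fst p) * v (snd p)" M] by simp
  also have "\<dots> = (\<integral>\<^sup>+x. u x * (\<integral>\<^sup>+y. v y \<partial>N) \<partial>M)"
    by (intro nn_integral_cong nn_integral_cmult) simp
  also have "\<dots> = (\<integral>\<^sup>+x. u x \<partial>M) * (\<integral>\<^sup>+y. v y \<partial>N)"
    by (rule nn_integral_multc) simp
  finally show ?thesis .
qed

lemma nn_integral_abs_diff_product_le:
  fixes f f' :: "'a \<Rightarrow> real" and g g' :: "'b \<Rightarrow> real"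
  assumes "sigma_finite_measure N"
    and [measurable]: "f \<in> borel_measurable M" "f' \<in> borel_measurable M"
      "g \<in> borel_measurable N" "g' \<in> borel_measurable N"
    and "\<And>x. 0 \<le> f' x" "\<And>y. 0 \<le> g y"
    and "(\<integral>\<^sup>+x. ennreal (f' x) \<partial>M) = 1" "(\<integral>\<^sup>+y. ennreal (g y) \<partial>N) = 1"
  shows "(\<integral>\<^sup>+p. ennreal \<bar>f (fst p) * g (snd p) - f' (fst p) * g' (snd p)\<bar> \<partial>(M \<Otimes>\<^sub>M N))
    \<le> (\<integral>\<^sup>+x. ennreal \<bar>f x - f' x\<bar> \<partial>M) + (\<integral>\<^sup>+y. ennreal \<bar>g y - g' y\<bar> \<partial>N)"
proof -
  have "ennreal \<bar>f x * g y - f' x * g' y\<bar> \<le> ennreal \<bar>f x - f' x\<bar> * ennreal (g y) + ennreal (f' x) * ennreal \<bar>g y - g' y\<bar>"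
    for x y
  proof -
    have "\<bar>f x * g y - f' x * g' y\<bar> = \<bar>(f x - f' x) * g y + f' x * (g y - g' y)\<bar>"
      by (simp add: algebra_simps)
    also have "\<dots> \<le> \<bar>f x - f' x\<bar> * g y + f' x * \<bar>g y - g' y\<bar>"
      using assms(6,7) by (intro order_trans[OF abs_triangle_ineq]) (simp add: abs_mult)
    finally have "ennreal \<bar>f x * g y - f' x * g' y\<bar> \<le> ennreal (\<bar>f x - f' x\<bar> * g y + f' x * \<bar>g y - g' y\<bar>)"
      by (rule ennreal_leI)
    also have "\<dots> = ennreal \<bar>f x - f' x\<bar> * ennreal (g y) + ennreal (f' x) * ennreal \<bar>g y - g' y\<bar>"
      using assms(6,7) by (simp add: ennreal_plus ennreal_mult)
    finally show ?thesis .
  qed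
  then have "(\<integral>\<^sup>+p. ennreal \<bar>f (fst p) * g (snd p) - f' (fst p) * g' (snd p)\<bar> \<partial>(M \<Otimes>\<^sub>M N))
    \<le> (\<integral>\<^sup>+p. ennreal \<bar>f (fst p) - f' (fst p)\<bar> * ennreal (g (snd p))
          + ennreal (f' (fst p)) * ennreal \<bar>g (snd p) - g' (snd p)\<bar> \<partial>(M \<Otimes>\<^sub>M N))"
    by (intro nn_integral_mono)
  also have "\<dots> = (\<integral>\<^sup>+x. ennreal \<bar>f x - f' x\<bar> \<partial>M) * (\<integral>\<^sup>+y. ennreal (g y) \<partial>N)
      + (\<integral>\<^sup>+x. ennreal (f' x) \<partial>M) * (\<integral>\<^sup>+y. ennreal \<bar>g y - g' y\<bar> \<partial>N)"
    using nn_integral_pair_measure_mult[OF assms(1), of "\<lambda>x. ennreal \<bar>f x - f' x\<bar>" M "\<lambda>y. ennreal (g y)"]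
      nn_integral_pair_measure_mult[OF assms(1), of "\<lambda>x. ennreal (f' x)" M "\<lambda>y. ennreal \<bar>g y - g' y\<bar>"]
    by (subst nn_integral_add) simp_all
  finally show ?thesis
    by (simp add: assms(8,9))
qed

lemma integral_discrete_mixing:
  assumes F: "is_discrete_mixing F N w z" and [measurable]: "h \<in> borel_measurable borel"
  shows "(\<integral>x. h x \<partial>F) = (\<Sum>j=1..N. w j * h (z j))"
proof -
  define S where "S = z ` {1..N}"
  have sets_F: "sets F = sets borel" and w: "\<And>j. j \<in> {1..N} \<Longrightarrow> 0 \<le> w j"
    and emeasure_F: "\<And>A. A \<in> sets borel \<Longrightarrow> emeasure F A = ennreal (\<Sum>j=1..N. w j * indicator A (z j))"
    using F unfolding is_discrete_mixing_def by auto
  have [measurable]: "h \<in> borel_measurable F"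
    by (subst measurable_cong_sets[OF sets_F refl]) simp
  have [measurable]: "S \<in> sets F"
    using sets_F by (simp add: S_def finite_imp_closed)
  have "emeasure F (- S) = 0"
    by (subst emeasure_F) (auto simp: S_def finite_imp_closed intro!: sum.neutral)
  then have "AE x in F. x \<in> S"
    using sets_F by (intro AE_I[of _ _ "- S"]) (auto simp: finite_imp_closed S_def)
  then have "(\<integral>x. h x \<partial>F) = (\<integral>x. h x * indicator S x \<partial>F)"
    by (intro integral_cong_AE) (measurable, auto elim: eventually_mono)
  also have "\<dots> = (\<Sum>a\<in>S. h a * measure F {a})"
    using sets_F emeasure_F by (intro integral_indicator_finite_real) (auto simp: S_def)
  also have "\<dots> = (\<Sum>a\<in>S. \<Sum>j=1..N. h a * (w j * indicator {a} (z j)))"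
  proof (intro sum.cong refl)
    fix a
    have "0 \<le> (\<Sum>j=1..N. w j * indicator {a} (z j))"
      using w by (intro sum_nonneg) auto
    moreover have "emeasure F {a} = ennreal (\<Sum>j=1..N. w j * indicator {a} (z j))"
      by (rule emeasure_F) simp
    ultimately show "h a * measure F {a} = (\<Sum>j=1..N. h a * (w j * indicator {a} (z j)))"
      by (simp only: measure_def enn2real_ennreal sum_distrib_left)
  qed
  also have "\<dots> = (\<Sum>j=1..N. w j * h (z j))"
  proof (subst sum.swap, intro sum.cong refl)
    fix j assume "j \<in> {1..N}"
    then have "z j \<in> S" "finite S" by (simp_all add: S_def)
    then show "(\<Sum>a\<in>S. h a * (w j * indicator {a} (z j))) = w j * h (z j)"
      by (simp add: indicator_def of_bool_def if_distrib eq_commute[of "z j"] cong: if_cong)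
  qed
  finally show ?thesis .
qed

lemma sum_weights_discrete_mixing:
  assumes "prob_space F" and "is_discrete_mixing F N w z"
  shows "(\<Sum>j=1..N. w j) = 1"
proof -
  have "(\<Sum>j=1..N. w j) = (\<integral>x. 1 \<partial>F)"
    using integral_discrete_mixing[OF assms(2), of "\<lambda>_. 1"] by simp
  also have "\<dots> = 1"
    using prob_space.prob_space[OF assms(1)] by simp
  finally show ?thesis .
qed

definition eiv_kernel :: "real \<Rightarrow> real \<Rightarrow> real \<Rightarrow> real \<Rightarrow> real \<Rightarrow> real \<times> real \<Rightarrow> real" where
  "eiv_kernel \<alpha> \<beta> \<sigma> \<tau> c v = normal_density c \<sigma> (fst v) * normal_density (\<alpha> + \<beta> * c) \<tau> (snd v)"

lemma eiv_kernel_nonneg: "0 \<le> eiv_kernel \<alpha> \<beta> \<sigma> \<tau> c v"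
  by (simp add: eiv_kernel_def)

lemma borel_measurable_eiv_kernel [measurable]: "eiv_kernel \<alpha> \<beta> \<sigma> \<tau> c \<in> borel_measurable lborel"
proof -
  have "eiv_kernel \<alpha> \<beta> \<sigma> \<tau> c \<in> borel_measurable (lborel \<Otimes>\<^sub>M lborel)"
    unfolding eiv_kernel_def[abs_def] by measurable
  then show ?thesis
    by (simp add: lborel_prod)
qed

lemma eiv_density_discrete_mixing:
  assumes "is_discrete_mixing F N w z"
  shows "eiv_density \<alpha> \<beta> \<sigma> \<tau> F v = (\<Sum>j=1..N. w j * eiv_kernel \<alpha> \<beta> \<sigma> \<tau> (z j) v)"
proof -
  have "phi \<sigma> (fst v - c) * phi \<tau> (snd v - \<alpha> - \<beta> * c) = eiv_kernel \<alpha> \<beta> \<sigma> \<tau> c v" for c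
    by (simp add: phi_def eiv_kernel_def normal_density_def diff_diff_eq)
  then have "eiv_density \<alpha> \<beta> \<sigma> \<tau> F v = (\<integral>c. eiv_kernel \<alpha> \<beta> \<sigma> \<tau> c v \<partial>F)"
    by (simp add: eiv_density_def case_prod_beta)
  also have "\<dots> = (\<Sum>j=1..N. w j * eiv_kernel \<alpha> \<beta> \<sigma> \<tau> (z j) v)"
    by (rule integral_discrete_mixing[OF assms]) (unfold eiv_kernel_def normal_density_def, measurable)
  finally show ?thesis .
qed

lemma nn_integral_eiv_kernel:
  assumes "\<sigma> > 0" and "\<tau> > 0"
  shows "(\<integral>\<^sup>+v. ennreal (eiv_kernel \<alpha> \<beta> \<sigma> \<tau> c v) \<partial>lborel) = 1"
  using nn_integral_pair_measure_mult[OF sigma_finite_lborel,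
      of "\<lambda>x. ennreal (normal_density c \<sigma> x)" lborel "\<lambda>y. ennreal (normal_density (\<alpha> + \<beta> * c) \<tau> y)"]
  using assms
  by (simp add: eiv_kernel_def lborel_prod ennreal_mult nn_integral_normal_density)

lemma nn_integral_abs_diff_eiv_kernel_le:
  assumes "\<sigma> > 0" and "\<tau> > 0"
  shows "(\<integral>\<^sup>+v. ennreal \<bar>eiv_kernel \<alpha> \<beta> \<sigma> \<tau> c v - eiv_kernel \<alpha> \<beta> \<sigma> \<tau> c' v\<bar> \<partial>lborel)
    \<le> ennreal (sqrt (2 / pi) * (1 / \<sigma> + \<bar>\<beta>\<bar> / \<tau>) * \<bar>c - c'\<bar>)"
proof -
  have "(\<integral>\<^sup>+v. ennreal \<bar>eiv_kernel \<alpha> \<beta> \<sigma> \<tau> c v - eiv_kernel \<alpha> \<beta> \<sigma> \<tau> c' v\<bar> \<partial>lborel)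
    \<le> (\<integral>\<^sup>+x. ennreal \<bar>normal_density c \<sigma> x - normal_density c' \<sigma> x\<bar> \<partial>lborel)
      + (\<integral>\<^sup>+y. ennreal \<bar>normal_density (\<alpha> + \<beta> * c) \<tau> y - normal_density (\<alpha> + \<beta> * c') \<tau> y\<bar> \<partial>lborel)"
    unfolding eiv_kernel_def lborel_prod[symmetric] using assms
    by (intro nn_integral_abs_diff_product_le) (auto simp: nn_integral_normal_density sigma_finite_lborel)
  also have "\<dots> \<le> ennreal (sqrt (2 / pi) * \<bar>c - c'\<bar> / \<sigma>) + ennreal (sqrt (2 / pi) * (\<bar>\<beta>\<bar> * \<bar>c - c'\<bar>) / \<tau>)"
  proof -
    have "\<bar>(\<alpha> + \<beta> * c) - (\<alpha> + \<beta> * c')\<bar> = \<bar>\<beta>\<bar> * \<bar>c - c'\<bar>"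
      by (simp add: abs_mult[symmetric] algebra_simps)
    then show ?thesis
      using nn_integral_abs_diff_normal_density_le[OF assms(2), of "\<alpha> + \<beta> * c" "\<alpha> + \<beta> * c'"]
      by (intro add_mono nn_integral_abs_diff_normal_density_le[OF assms(1)]) (simp only:)
  qed
  also have "\<dots> = ennreal (sqrt (2 / pi) * \<bar>c - c'\<bar> / \<sigma> + sqrt (2 / pi) * (\<bar>\<beta>\<bar> * \<bar>c - c'\<bar>) / \<tau>)"
    using assms by (intro ennreal_plus[symmetric]) auto
  also have "\<dots> = ennreal (sqrt (2 / pi) * (1 / \<sigma> + \<bar>\<beta>\<bar> / \<tau>) * \<bar>c - c'\<bar>)"
    by (rule arg_cong[where f = ennreal]) (simp add: algebra_simps)
  finally show ?thesis .
qed

lemma nn_integral_abs_diff_eiv_kernel_le':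
  assumes "\<sigma> > 0" and "\<gamma> > 0"
  shows "(\<integral>\<^sup>+v. ennreal \<bar>eiv_kernel \<alpha> \<beta> \<sigma> (\<gamma> * \<sigma>) c v - eiv_kernel \<alpha> \<beta> \<sigma> (\<gamma> * \<sigma>) c' v\<bar> \<partial>lborel)
    \<le> ennreal (2 * ((1 + \<bar>\<beta>\<bar> / \<gamma>) * \<bar>c - c'\<bar> / \<sigma>))"
proof -
  have "2 / pi \<le> 1"
    using pi_gt3 by simp
  then have "sqrt (2 / pi) \<le> 2"
    using real_sqrt_le_1_iff[of "2 / pi"] by linarith
  then have "sqrt (2 / pi) * ((1 + \<bar>\<beta>\<bar> / \<gamma>) * \<bar>c - c'\<bar> / \<sigma>) \<le> 2 * ((1 + \<bar>\<beta>\<bar> / \<gamma>) * \<bar>c - c'\<bar> / \<sigma>)"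
    using assms by (intro mult_right_mono) auto
  moreover have "sqrt (2 / pi) * (1 / \<sigma> + \<bar>\<beta>\<bar> / (\<gamma> * \<sigma>)) * \<bar>c - c'\<bar>
      = sqrt (2 / pi) * ((1 + \<bar>\<beta>\<bar> / \<gamma>) * \<bar>c - c'\<bar> / \<sigma>)"
    using assms by (simp add: field_simps)
  ultimately show ?thesis
    using assms by (intro order_trans[OF nn_integral_abs_diff_eiv_kernel_le ennreal_leI]) auto
qed

lemma abs_diff_mixture_le:
  fixes w w' p q :: "nat \<Rightarrow> real"
  assumes "K \<le> N" and "K \<le> N'"
    and w: "\<And>j. j \<in> {1..N} \<Longrightarrow> 0 \<le> w j" and w': "\<And>j. j \<in> {1..N'} \<Longrightarrow> 0 \<le> w' j"
    and p: "\<And>j. 0 \<le> p j" and q: "\<And>j. 0 \<le> q j"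
  shows "\<bar>(\<Sum>j=1..N. w j * p j) - (\<Sum>j=1..N'. w' j * q j)\<bar>
    \<le> (\<Sum>j=1..K. w j * \<bar>p j - q j\<bar>) + (\<Sum>j=1..K. \<bar>w j - w' j\<bar> * q j)
      + (\<Sum>j=K+1..N. w j * p j) + (\<Sum>j=K+1..N'. w' j * q j)"
proof -
  have split: "(\<Sum>j=1..M. f j) = (\<Sum>j=1..K. f j) + (\<Sum>j=K+1..M. f j)"
    if "K \<le> M" for M and f :: "nat \<Rightarrow> real"
    using that by (subst sum.union_disjoint[symmetric]) (auto intro!: sum.cong)
  have "\<bar>(\<Sum>j=1..K. w j * p j) - (\<Sum>j=1..K. w' j * q j)\<bar>
      = \<bar>\<Sum>j=1..K. w j * (p j - q j) + (w j - w' j) * q j\<bar>"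
    by (simp add: sum_subtractf[symmetric] algebra_simps)
  also have "\<dots> \<le> (\<Sum>j=1..K. \<bar>w j * (p j - q j) + (w j - w' j) * q j\<bar>)"
    by (rule sum_abs)
  also have "\<dots> \<le> (\<Sum>j=1..K. w j * \<bar>p j - q j\<bar> + \<bar>w j - w' j\<bar> * q j)"
    using assms(1) w q by (intro sum_mono order_trans[OF abs_triangle_ineq]) (simp add: abs_mult)
  finally have head: "\<bar>(\<Sum>j=1..K. w j * p j) - (\<Sum>j=1..K. w' j * q j)\<bar>
      \<le> (\<Sum>j=1..K. w j * \<bar>p j - q j\<bar>) + (\<Sum>j=1..K. \<bar>w j - w' j\<bar> * q j)"
    by (simp add: sum.distrib)
  have "0 \<le> (\<Sum>j=K+1..N. w j * p j)" "0 \<le> (\<Sum>j=K+1..N'. w' j * q j)"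
    using assms by (auto intro!: sum_nonneg)
  then show ?thesis
    using head split[OF assms(1), of "\<lambda>j. w j * p j"] split[OF assms(2), of "\<lambda>j. w' j * q j"]
    by linarith
qed

lemma nn_integral_weighted_sum_le:
  fixes c B :: "'i \<Rightarrow> real" and g :: "'i \<Rightarrow> 'a \<Rightarrow> real"
  assumes "\<And>j. j \<in> I \<Longrightarrow> 0 \<le> c j" and "\<And>j v. j \<in> I \<Longrightarrow> 0 \<le> g j v"
    and "\<And>j. j \<in> I \<Longrightarrow> g j \<in> borel_measurable M"
    and "\<And>j. j \<in> I \<Longrightarrow> 0 \<le> B j" and "\<And>j. j \<in> I \<Longrightarrow> (\<integral>\<^sup>+v. ennreal (g j v) \<partial>M) \<le> ennreal (B j)"
  shows "(\<integral>\<^sup>+v. ennreal (\<Sum>j\<in>I. c j * g j v) \<partial>M) \<le> ennreal (\<Sum>j\<in>I. c j * B j)"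
proof -
  have "(\<integral>\<^sup>+v. ennreal (\<Sum>j\<in>I. c j * g j v) \<partial>M) = (\<integral>\<^sup>+v. (\<Sum>j\<in>I. ennreal (c j) * ennreal (g j v)) \<partial>M)"
    using assms(1,2) by (intro nn_integral_cong) (simp add: sum_ennreal[symmetric] ennreal_mult)
  also have "\<dots> = (\<Sum>j\<in>I. ennreal (c j) * (\<integral>\<^sup>+v. ennreal (g j v) \<partial>M))"
    using assms(3) by (simp add: nn_integral_sum nn_integral_cmult)
  also have "\<dots> \<le> (\<Sum>j\<in>I. ennreal (c j) * ennreal (B j))"
    using assms(5) by (intro sum_mono mult_left_mono) auto
  also have "\<dots> = ennreal (\<Sum>j\<in>I. c j * B j)"
    using assms(1,4) by (simp add: sum_ennreal[symmetric] ennreal_mult)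
  finally show ?thesis .
qed

lemma nn_integral_abs_diff_mixture_le:
  fixes w w' :: "nat \<Rightarrow> real" and p q :: "nat \<Rightarrow> 'a \<Rightarrow> real"
  assumes "K \<le> N" and "K \<le> N'"
    and w: "\<And>j. j \<in> {1..N} \<Longrightarrow> 0 \<le> w j" and w': "\<And>j. j \<in> {1..N'} \<Longrightarrow> 0 \<le> w' j"
    and p: "\<And>j v. 0 \<le> p j v" and q: "\<And>j v. 0 \<le> q j v"
    and [measurable]: "\<And>j. p j \<in> borel_measurable M" "\<And>j. q j \<in> borel_measurable M"
    and p_le_1: "\<And>j. (\<integral>\<^sup>+v. ennreal (p j v) \<partial>M) \<le> 1"
    and q_le_1: "\<And>j. (\<integral>\<^sup>+v. ennreal (q j v) \<partial>M) \<le> 1"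
    and "(\<Sum>j=1..N. w j) \<le> 1" and "0 \<le> \<delta>"
    and close: "\<And>j. j \<in> {1..K} \<Longrightarrow> (\<integral>\<^sup>+v. ennreal \<bar>p j v - q j v\<bar> \<partial>M) \<le> ennreal \<delta>"
  shows "(\<integral>\<^sup>+v. ennreal \<bar>(\<Sum>j=1..N. w j * p j v) - (\<Sum>j=1..N'. w' j * q j v)\<bar> \<partial>M)
    \<le> ennreal (\<delta> + (\<Sum>j=1..K. \<bar>w j - w' j\<bar>) + (\<Sum>j=K+1..N. w j) + (\<Sum>j=K+1..N'. w' j))"
proof -
  let ?S1 = "\<lambda>v. \<Sum>j=1..K. w j * \<bar>p j v - q j v\<bar>"
  let ?S2 = "\<lambda>v. \<Sum>j=1..K. \<bar>w j - w' j\<bar> * q j v"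
  let ?S3 = "\<lambda>v. \<Sum>j=K+1..N. w j * p j v"
  let ?S4 = "\<lambda>v. \<Sum>j=K+1..N'. w' j * q j v"
  have w_K: "\<And>j. j \<in> {1..K} \<Longrightarrow> 0 \<le> w j"
    using w assms(1) by auto
  have nonneg: "0 \<le> ?S1 v" "0 \<le> ?S2 v" "0 \<le> ?S3 v" "0 \<le> ?S4 v" for v
    using w_K w w' p q by (auto intro!: sum_nonneg)
  have "ennreal \<bar>(\<Sum>j=1..N. w j * p j v) - (\<Sum>j=1..N'. w' j * q j v)\<bar>
      \<le> ennreal (?S1 v) + ennreal (?S2 v) + ennreal (?S3 v) + ennreal (?S4 v)" for v
    using abs_diff_mixture_le[OF assms(1-4), where p = "\<lambda>j. p j v" and q = "\<lambda>j. q j v"] p q nonneg[of v]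
    by (simp add: ennreal_plus[symmetric] ennreal_leI del: ennreal_plus)
  then have "(\<integral>\<^sup>+v. ennreal \<bar>(\<Sum>j=1..N. w j * p j v) - (\<Sum>j=1..N'. w' j * q j v)\<bar> \<partial>M)
      \<le> (\<integral>\<^sup>+v. ennreal (?S1 v) \<partial>M) + (\<integral>\<^sup>+v. ennreal (?S2 v) \<partial>M)
        + (\<integral>\<^sup>+v. ennreal (?S3 v) \<partial>M) + (\<integral>\<^sup>+v. ennreal (?S4 v) \<partial>M)"
    by (subst nn_integral_add[symmetric], simp, simp)+ (rule nn_integral_mono)
  also have "\<dots> \<le> ennreal (\<Sum>j=1..K. w j * \<delta>) + ennreal (\<Sum>j=1..K. \<bar>w j - w' j\<bar> * 1)
      + ennreal (\<Sum>j=K+1..N. w j * 1) + ennreal (\<Sum>j=K+1..N'. w' j * 1)"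
    using w_K w w' p q close p_le_1 q_le_1 \<open>0 \<le> \<delta>\<close>
    by (intro add_mono nn_integral_weighted_sum_le) auto
  also have "\<dots> \<le> ennreal (\<delta> + (\<Sum>j=1..K. \<bar>w j - w' j\<bar>) + (\<Sum>j=K+1..N. w j) + (\<Sum>j=K+1..N'. w' j))"
  proof -
    have "0 \<le> (\<Sum>j=1..K. w j * \<delta>)" "0 \<le> (\<Sum>j=1..K. \<bar>w j - w' j\<bar>)"
      "0 \<le> (\<Sum>j=K+1..N. w j)" "0 \<le> (\<Sum>j=K+1..N'. w' j)"
      using w_K w w' \<open>0 \<le> \<delta>\<close> by (auto intro!: sum_nonneg)
    moreover have "(\<Sum>j=1..K. w j) \<le> (\<Sum>j=1..N. w j)"
      using w assms(1) by (intro sum_mono2) auto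
    then have "(\<Sum>j=1..K. w j * \<delta>) \<le> \<delta>"
      using mult_right_mono[of "\<Sum>j=1..K. w j" 1 \<delta>] \<open>(\<Sum>j=1..N. w j) \<le> 1\<close> \<open>0 \<le> \<delta>\<close>
      by (simp add: sum_distrib_right)
    ultimately show ?thesis
      by (simp add: ennreal_plus[symmetric] ennreal_leI del: ennreal_plus)
  qed
  finally show ?thesis .
qed

theorem mainTheorem12:
  fixes \<alpha> \<beta> \<sigma> \<gamma> :: real and N N' :: nat and w z w' z' :: "nat \<Rightarrow> real"
    and F F' :: "real measure"
  assumes "\<sigma> > 0" and "\<gamma> > 0"
    and "prob_space F" and "is_discrete_mixing F N w z"
    and "prob_space F'" and "is_discrete_mixing F' N' w' z'"
  defines "K \<equiv> min N N'"
  shows "(\<integral>\<^sup>+ v. ennreal \<bar>eiv_density \<alpha> \<beta> \<sigma> (\<gamma> * \<sigma>) F v - eiv_density \<alpha> \<beta> \<sigma> (\<gamma> * \<sigma>) F' v\<bar> \<partial>lborel)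
     \<le> ennreal (2 * Max ((\<lambda>j. (1 + \<bar>\<beta>\<bar> / \<gamma>) * \<bar>z j - z' j\<bar> / \<sigma>) ` {1..K})
        + (\<Sum>j=1..K. \<bar>w j - w' j\<bar>) + (\<Sum>j=K+1..N. w j) + (\<Sum>j=K+1..N'. w' j))"
proof -
  define D where "D = Max ((\<lambda>j. (1 + \<bar>\<beta>\<bar> / \<gamma>) * \<bar>z j - z' j\<bar> / \<sigma>) ` {1..K})"
  have w: "\<And>j. j \<in> {1..N} \<Longrightarrow> 0 \<le> w j" and w': "\<And>j. j \<in> {1..N'} \<Longrightarrow> 0 \<le> w' j"
    using assms(4,6) by (auto simp: is_discrete_mixing_def)
  have sum_w: "(\<Sum>j=1..N. w j) = 1" and "(\<Sum>j=1..N'. w' j) = 1"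
    using sum_weights_discrete_mixing assms(3-6) by blast+
  then have "1 \<le> K"
    by (cases "N = 0 \<or> N' = 0") (auto simp: K_def)
  have D_ge: "(1 + \<bar>\<beta>\<bar> / \<gamma>) * \<bar>z j - z' j\<bar> / \<sigma> \<le> D" if "j \<in> {1..K}" for j
    unfolding D_def using that by (intro Max_ge) auto
  have "0 \<le> (1 + \<bar>\<beta>\<bar> / \<gamma>) * \<bar>z 1 - z' 1\<bar> / \<sigma>"
    using assms(1,2) by simp
  then have "0 \<le> 2 * D"
    using D_ge[of 1] \<open>1 \<le> K\<close> by simp
  have "(\<integral>\<^sup>+v. ennreal \<bar>eiv_kernel \<alpha> \<beta> \<sigma> (\<gamma> * \<sigma>) (z j) v - eiv_kernel \<alpha> \<beta> \<sigma> (\<gamma> * \<sigma>) (z' j) v\<bar> \<partial>lborel)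
      \<le> ennreal (2 * D)" if "j \<in> {1..K}" for j
    using D_ge[OF that]
    by (intro order_trans[OF nn_integral_abs_diff_eiv_kernel_le'[OF assms(1,2)] ennreal_leI]) simp
  then show ?thesis
    unfolding eiv_density_discrete_mixing[OF assms(4)] eiv_density_discrete_mixing[OF assms(6)] D_def[symmetric]
    using w w' sum_w \<open>0 \<le> 2 * D\<close> assms(1,2)
    by (intro nn_integral_abs_diff_mixture_le)
      (simp_all add: K_def eiv_kernel_nonneg nn_integral_eiv_kernel)
qed

end
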